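(* Suppose $G$ is twice differentiable and log-concave with density $g$, and there exist constants $B_1,B_2>0$ with $B_1\le g(x)\le B_2$ for all $x\in[0,1]$. Then $b^*(v,\alpha)$ is strictly increasing in $\alpha$, with $\frac{\partial b^*(v,\alpha)}{\partial\alpha}\le \frac{1}{B_1}$.
   Context: $G$ is the CDF of the highest competing bid; for a value $v\in[0,1]$, bid $b\ge0$ and credibility $\alpha\in[0,1]$, $r(v,b,\alpha)=(v-b)G(b)+\alpha\int_0^bG(y)\,dy$ and $b^*(v,\alpha)=\arg\max_b r(v,b,\alpha)$, taking the largest maximizer in case of ties. *)

theory Defs
  imports "HOL-Analysis.Analysis"
begin

definition payoff :: "(real \<Rightarrow> real) \<Rightarrow> real \<Rightarrow> real \<Rightarrow> real \<Rightarrow> real" where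
  "payoff G v b \<alpha> = (v - b) * G b + \<alpha> * integral {0..b} G"

definition bstar :: "(real \<Rightarrow> real) \<Rightarrow> real \<Rightarrow> real \<Rightarrow> real" where
  "bstar G v \<alpha> = (GREATEST b. 0 \<le> b \<and> (\<forall>b'\<ge>0. payoff G v b' \<alpha> \<le> payoff G v b \<alpha>))"

end

theory Submission
  imports Defs
begin

text \<open>The payoff has derivative G b * (\<alpha> - A b) in b, where A b = 1 - (v - b) * g b / G b.
  Log-concavity of G makes the reverse hazard rate g / G nonincreasing, and g / G \<ge> g \<ge> B1
  because G \<le> 1; hence A increases on (0, v] with slope at least B1, is negative near 0 and
  equals 1 at v. For \<alpha> \<in> [0, 1] the payoff therefore rises up to the unique root of A = \<alpha> in
  (0, v], falls from there to v, and every bid above v is beaten by v itself. So b* is the inverse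
  of A on the preimage of [0, 1], strictly increasing, with derivative 1 / A'(b*) \<le> 1 / B1.\<close>

lemma DERIV_ge_if_right_slopes_ge:
  fixes f :: "real \<Rightarrow> real"
  assumes "(f has_real_derivative D) (at x)" "x < y"
    and "\<And>t. x < t \<Longrightarrow> t < y \<Longrightarrow> c \<le> (f t - f x) / (t - x)"
  shows "c \<le> D"
proof (rule tendsto_lowerbound)
  show "((\<lambda>t. (f t - f x) / (t - x)) \<longlongrightarrow> D) (at_right x)"
    using assms(1) unfolding has_field_derivative_iff by (rule tendsto_mono[rotated]) (simp add: at_le)
  show "\<forall>\<^sub>F t in at_right x. c \<le> (f t - f x) / (t - x)"
    unfolding eventually_at_right_field using assms(2,3) by blast
qed simp

lemma DERIV_imp_left_slopes_tendsto:
  fixes f :: "real \<Rightarrow> real"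
  assumes "(f has_real_derivative D) (at y)"
  shows "((\<lambda>t. (f y - f t) / (y - t)) \<longlongrightarrow> D) (at_left y)"
proof -
  have "((\<lambda>t. (f t - f y) / (t - y)) \<longlongrightarrow> D) (at_left y)"
    using assms unfolding has_field_derivative_iff by (rule tendsto_mono[rotated]) (simp add: at_le)
  moreover have "(f t - f y) / (t - y) = (f y - f t) / (y - t)" for t
    by (metis minus_diff_eq minus_divide_divide)
  ultimately show ?thesis by simp
qed

lemma DERIV_le_if_left_slopes_le:
  fixes f :: "real \<Rightarrow> real"
  assumes "(f has_real_derivative D) (at y)" "x < y"
    and "\<And>t. x < t \<Longrightarrow> t < y \<Longrightarrow> (f y - f t) / (y - t) \<le> c"
  shows "D \<le> c"
proof (rule tendsto_upperbound[OF DERIV_imp_left_slopes_tendsto[OF assms(1)]])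
  show "\<forall>\<^sub>F t in at_left y. (f y - f t) / (y - t) \<le> c"
    unfolding eventually_at_left_field using assms(2,3) by blast
qed simp

lemma DERIV_ge_if_left_slopes_ge:
  fixes f :: "real \<Rightarrow> real"
  assumes "(f has_real_derivative D) (at y)" "x < y"
    and "\<And>t. x < t \<Longrightarrow> t < y \<Longrightarrow> c \<le> (f y - f t) / (y - t)"
  shows "c \<le> D"
proof (rule tendsto_lowerbound[OF DERIV_imp_left_slopes_tendsto[OF assms(1)]])
  show "\<forall>\<^sub>F t in at_left y. c \<le> (f y - f t) / (y - t)"
    unfolding eventually_at_left_field using assms(2,3) by blast
qed simp

lemma concave_on_DERIV_antimono:
  fixes f :: "real \<Rightarrow> real"
  assumes f: "concave_on I f" and I: "x \<in> I" "y \<in> I" and "x < y"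
    and Dx: "(f has_real_derivative Dx) (at x)" and Dy: "(f has_real_derivative Dy) (at y)"
  shows "Dy \<le> Dx"
proof -
  have cvx: "convex_on I (\<lambda>t. - f t)"
    using f by (simp add: concave_on_def)
  define slope where "slope = (f y - f x) / (y - x)"
  have "slope \<le> Dx"
  proof (rule DERIV_ge_if_right_slopes_ge[OF Dx \<open>x < y\<close>])
    fix t assume "x < t" "t < y"
    then show "slope \<le> (f t - f x) / (t - x)"
      using convex_on_slope_le(1)[OF cvx I, of t] unfolding slope_def
      by (simp add: divide_simps algebra_simps)
  qed
  moreover have "Dy \<le> slope"
  proof (rule DERIV_le_if_left_slopes_le[OF Dy \<open>x < y\<close>])
    fix t assume "x < t" "t < y"
    then show "(f y - f t) / (y - t) \<le> slope"
      using convex_on_slope_le(2)[OF cvx I, of t] unfolding slope_def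
      by (simp add: divide_simps algebra_simps)
  qed
  ultimately show ?thesis by simp
qed

lemma mono_integrable_on:
  fixes f :: "real \<Rightarrow> real"
  assumes "mono f"
  shows "f integrable_on {a..b}"
  using assms by (intro integrable_on_mono_on) (auto simp: mono_on_def monoD)

lemma mono_integral_le:
  fixes f :: "real \<Rightarrow> real"
  assumes "mono f" "a \<le> b"
  shows "integral {a..b} f \<le> (b - a) * f b"
proof -
  have "integral {a..b} f \<le> integral {a..b} (\<lambda>_. f b)"
    by (rule integral_le) (use assms mono_integrable_on in \<open>auto simp: monoD\<close>)
  then show ?thesis using assms(2) by simp
qed

lemma mono_integral_less:
  fixes f :: "real \<Rightarrow> real"
  assumes f: "mono f" and m: "a < m" "m \<le> b" and "f m < f b"
  shows "integral {a..b} f < (b - a) * f b"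
proof -
  have "integral {a..b} f = integral {a..m} f + integral {m..b} f"
    using m mono_integrable_on[OF f] by (simp add: Henstock_Kurzweil_Integration.integral_combine)
  also have "\<dots> \<le> (m - a) * f m + (b - m) * f b"
    using mono_integral_le[OF f] m by (intro add_mono) auto
  also have "\<dots> < (m - a) * f b + (b - m) * f b"
    using m \<open>f m < f b\<close> by simp
  also have "\<dots> = (b - a) * f b"
    by (simp add: algebra_simps)
  finally show ?thesis .
qed

lemma DERIV_inverse_function_within:
  fixes f g :: "real \<Rightarrow> real"
  assumes "(f has_real_derivative D) (at a within S)" "D \<noteq> 0"
    and "continuous (at (f a) within f ` S) g" "a \<in> S" "\<And>x. x \<in> S \<Longrightarrow> g (f x) = x"
  shows "(g has_real_derivative inverse D) (at (f a) within f ` S)"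
  unfolding has_field_derivative_def
  by (rule has_derivative_inverse_within)
    (use assms bounded_linear.linear[OF bounded_linear_mult_right]
      in \<open>auto simp: has_field_derivative_def fun_eq_iff\<close>)

lemma bstar_eqI:
  assumes "0 \<le> b\<^sub>0" and "\<And>b. 0 \<le> b \<Longrightarrow> b \<noteq> b\<^sub>0 \<Longrightarrow> payoff G v b \<alpha> < payoff G v b\<^sub>0 \<alpha>"
  shows "bstar G v \<alpha> = b\<^sub>0"
  unfolding bstar_def
proof (rule Greatest_equality)
  show "0 \<le> b\<^sub>0 \<and> (\<forall>b\<ge>0. payoff G v b \<alpha> \<le> payoff G v b\<^sub>0 \<alpha>)"
    using assms by (metis less_eq_real_def)
next
  fix b assume b: "0 \<le> b \<and> (\<forall>b'\<ge>0. payoff G v b' \<alpha> \<le> payoff G v b \<alpha>)"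
  then have "payoff G v b\<^sub>0 \<alpha> \<le> payoff G v b \<alpha>"
    using assms(1) by blast
  then have "b = b\<^sub>0"
    using assms(2)[of b] b by fastforce
  then show "b \<le> b\<^sub>0" by simp
qed

locale log_concave_cdf =
  fixes G g :: "real \<Rightarrow> real" and B1 :: real
  assumes G_mono: "mono G"
    and G_zero: "\<forall>x\<le>0. G x = 0"
    and G_top: "(G \<longlongrightarrow> 1) at_top"
    and G_deriv: "\<forall>x\<in>{0..1}. (G has_real_derivative g x) (at x within {0..1})"
    and g_diff: "\<forall>x\<in>{0..1}. g differentiable (at x within {0..1})"
    and G_logconcave: "concave_on {x. 0 < G x} (\<lambda>x. ln (G x))"
    and B1_pos: "B1 > 0"
    and g_lower: "\<forall>x\<in>{0..1}. B1 \<le> g x"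
begin

lemma G_DERIV: "0 < x \<Longrightarrow> x < 1 \<Longrightarrow> (G has_real_derivative g x) (at x)"
  using G_deriv[rule_format, of x] by (simp add: at_within_Icc_at)

lemma g_differentiable: "0 < x \<Longrightarrow> x < 1 \<Longrightarrow> g differentiable (at x)"
  using g_diff[rule_format, of x] by (simp add: at_within_Icc_at)

lemma G_continuous_on: "continuous_on {0..1} G"
  using G_deriv DERIV_continuous_on by blast

lemma G_less:
  assumes "0 \<le> x" "x < y" "y \<le> 1"
  shows "G x < G y"
proof (rule DERIV_pos_imp_increasing_open[OF \<open>x < y\<close>])
  fix z assume "x < z" "z < y"
  then have "0 < z" "z < 1" using assms by auto
  then show "\<exists>d. (G has_real_derivative d) (at z) \<and> 0 < d"
    using G_DERIV g_lower B1_pos by (metis atLeastAtMost_iff less_eq_real_def order_less_le_trans)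
next
  show "continuous_on {x..y} G"
    using continuous_on_subset[OF G_continuous_on] assms by auto
qed

lemma G_pos: "0 < x \<Longrightarrow> 0 < G x"
  using G_less[of 0 "min x 1"] G_zero monoD[OF G_mono, of "min x 1" x] by auto

lemma G_le_1: "G x \<le> 1"
proof (rule tendsto_lowerbound[OF G_top])
  show "\<forall>\<^sub>F y in at_top. G x \<le> G y"
    using G_mono by (metis eventually_at_top_linorder monoD)
qed simp

lemma G_tendsto_0: "(G \<longlongrightarrow> 0) (at_right 0)"
  using continuous_on_Icc_at_rightD[OF G_continuous_on] G_zero by simp

definition rev_hazard :: "real \<Rightarrow> real" where
  "rev_hazard x = g x / G x"

lemma ln_G_DERIV:
  "0 < x \<Longrightarrow> x < 1 \<Longrightarrow> ((\<lambda>x. ln (G x)) has_real_derivative rev_hazard x) (at x)"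
  unfolding rev_hazard_def
  by (auto intro!: derivative_eq_intros G_DERIV G_pos simp: field_simps)

lemma rev_hazard_antimono: "0 < x \<Longrightarrow> x < y \<Longrightarrow> y < 1 \<Longrightarrow> rev_hazard y \<le> rev_hazard x"
  by (rule concave_on_DERIV_antimono[OF G_logconcave _ _ _ ln_G_DERIV ln_G_DERIV]) (auto simp: G_pos)

lemma rev_hazard_ge:
  assumes "0 < x" "x \<le> 1"
  shows "B1 \<le> rev_hazard x"
proof -
  have "B1 \<le> g x"
    using g_lower assms by auto
  moreover have "g x \<le> g x / G x"
    using G_pos[OF \<open>0 < x\<close>] G_le_1[of x] B1_pos \<open>B1 \<le> g x\<close>
    by (simp add: le_divide_eq mult_left_le)
  ultimately show ?thesis
    unfolding rev_hazard_def by linarith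
qed

end

locale bidder = log_concave_cdf +
  fixes v :: real
  assumes v_pos: "0 < v" and v_less_1: "v < 1"
begin

text \<open>foc_alpha b is the credibility at which b satisfies the first-order condition of the payoff
  (see payoff_DERIV).\<close>
definition foc_alpha :: "real \<Rightarrow> real" where
  "foc_alpha b = 1 - (v - b) * rev_hazard b"

lemma payoff_DERIV:
  assumes "0 < b" "b < 1"
  shows "((\<lambda>b. payoff G v b \<alpha>) has_real_derivative G b * (\<alpha> - foc_alpha b)) (at b)"
proof -
  have "((\<lambda>b. integral {0..b} G) has_real_derivative G b) (at b)"
    using integral_has_real_derivative[OF G_continuous_on, of b] assms by (simp add: at_within_Icc_at)
  then show ?thesis
    unfolding payoff_def[abs_def] foc_alpha_def rev_hazard_def
    using assms G_pos[of b] by (auto intro!: derivative_eq_intros G_DERIV simp: field_simps)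
qed

lemma payoff_continuous_on: "continuous_on {0..1} (\<lambda>b. payoff G v b \<alpha>)"
  unfolding payoff_def
  by (intro continuous_intros G_continuous_on indefinite_integral_continuous_1
      mono_integrable_on G_mono)

lemma foc_alpha_slope:
  assumes "0 < x" "x < y" "y \<le> v"
  shows "B1 * (y - x) \<le> foc_alpha y - foc_alpha x"
proof -
  have "(v - y) * rev_hazard y \<le> (v - y) * rev_hazard x"
    using assms v_less_1 rev_hazard_antimono by (intro mult_left_mono) auto
  moreover have "B1 * (y - x) \<le> rev_hazard x * (y - x)"
    using assms v_less_1 rev_hazard_ge by (intro mult_right_mono) auto
  ultimately show ?thesis
    unfolding foc_alpha_def by (simp add: algebra_simps)
qed

lemma foc_alpha_less:
  assumes "0 < x" "x < y" "y \<le> v"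
  shows "foc_alpha x < foc_alpha y"
proof -
  have "0 < B1 * (y - x)"
    using B1_pos assms by simp
  then show ?thesis
    using foc_alpha_slope[OF assms] by linarith
qed

lemma foc_alpha_v [simp]: "foc_alpha v = 1"
  by (simp add: foc_alpha_def)

lemma foc_alpha_DERIV:
  assumes "0 < b" "b < 1"
  shows "(foc_alpha has_real_derivative deriv foc_alpha b) (at b)"
proof -
  have "(g has_real_derivative deriv g b) (at b)"
    using g_differentiable assms DERIV_deriv_iff_real_differentiable by blast
  then have "(foc_alpha has_real_derivative
      rev_hazard b - (v - b) * ((deriv g b * G b - g b * g b) / (G b)\<^sup>2)) (at b)"
    unfolding foc_alpha_def[abs_def] rev_hazard_def
    using assms G_DERIV[of b] G_pos[of b]
    by (auto intro!: derivative_eq_intros simp: field_simps power2_eq_square)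
  then show ?thesis
    by (simp add: DERIV_imp_deriv)
qed

lemma foc_alpha_continuous_on: "0 < a \<Longrightarrow> b < 1 \<Longrightarrow> continuous_on {a..b} foc_alpha"
  by (intro continuous_at_imp_continuous_on ballI DERIV_isCont[OF foc_alpha_DERIV]) auto

lemma deriv_foc_alpha_ge:
  assumes "0 < b" "b \<le> v"
  shows "B1 \<le> deriv foc_alpha b"
proof -
  have "(foc_alpha has_real_derivative deriv foc_alpha b) (at b)"
    using foc_alpha_DERIV assms v_less_1 by simp
  then show ?thesis
  proof (rule DERIV_ge_if_left_slopes_ge)
    show "0 < b" by fact
    fix t assume "0 < t" "t < b"
    then show "B1 \<le> (foc_alpha b - foc_alpha t) / (b - t)"
      using foc_alpha_slope[of t b] assms by (simp add: pos_le_divide_eq)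
  qed
qed

lemma foc_alpha_neg_near_0: "\<exists>b. 0 < b \<and> b < v \<and> foc_alpha b < 0"
proof -
  have "\<forall>\<^sub>F b in at_right 0. b < v / 2"
    unfolding eventually_at_right_field using v_pos by (intro exI[of _ "v / 2"]) auto
  then have "\<forall>\<^sub>F b in at_right 0. 0 < b \<and> b < v / 2 \<and> G b < v * B1 / 2"
    using eventually_at_right_less[of 0] order_tendstoD(2)[OF G_tendsto_0, of "v * B1 / 2"]
      v_pos B1_pos
    by (auto intro!: eventually_conj)
  then obtain b where b: "0 < b" "b < v / 2" "G b < v * B1 / 2"
    using eventually_happens'[OF trivial_limit_at_right_real] by blast
  have "v / 2 * B1 \<le> (v - b) * g b"
    using b v_less_1 g_lower B1_pos by (intro mult_mono) auto
  then have "1 < (v - b) * rev_hazard b"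
    unfolding rev_hazard_def using b G_pos[of b] by (simp add: less_divide_eq)
  then show ?thesis
    using b unfolding foc_alpha_def by (intro exI[of _ b]) auto
qed

definition bid0 :: real where
  "bid0 = (SOME b. 0 < b \<and> b \<le> v \<and> foc_alpha b = 0)"

lemma bid0: "0 < bid0" "bid0 \<le> v" "foc_alpha bid0 = 0"
proof -
  obtain a where a: "0 < a" "a < v" "foc_alpha a < 0"
    using foc_alpha_neg_near_0 by blast
  then obtain b where "a \<le> b" "b \<le> v" "foc_alpha b = 0"
    using IVT'[of foc_alpha a 0 v] foc_alpha_continuous_on[of a v] v_less_1 by auto
  then have "\<exists>b. 0 < b \<and> b \<le> v \<and> foc_alpha b = 0"
    using a by (intro exI[of _ b]) auto
  then show "0 < bid0" "bid0 \<le> v" "foc_alpha bid0 = 0"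
    unfolding bid0_def by (metis (mono_tags, lifting) someI_ex)+
qed

lemma foc_alpha_mono: "0 < x \<Longrightarrow> x \<le> y \<Longrightarrow> y \<le> v \<Longrightarrow> foc_alpha x \<le> foc_alpha y"
  using foc_alpha_less[of x y] by (cases "x = y") auto

lemma foc_alpha_image: "foc_alpha ` {bid0..v} = {0..1}"
proof
  show "foc_alpha ` {bid0..v} \<subseteq> {0..1}"
    using foc_alpha_mono[of bid0] foc_alpha_mono[of _ v] bid0 by fastforce
  show "{0..1} \<subseteq> foc_alpha ` {bid0..v}"
  proof
    fix \<alpha> :: real assume "\<alpha> \<in> {0..1}"
    then obtain b where "bid0 \<le> b" "b \<le> v" "foc_alpha b = \<alpha>"
      using IVT'[of foc_alpha bid0 \<alpha> v] foc_alpha_continuous_on[of bid0 v] bid0 v_less_1 by auto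
    then show "\<alpha> \<in> foc_alpha ` {bid0..v}" by auto
  qed
qed

lemma payoff_less_beyond_v:
  assumes "0 \<le> \<alpha>" "\<alpha> \<le> 1" "v < b"
  shows "payoff G v b \<alpha> < payoff G v v \<alpha>"
proof -
  define m where "m = (v + min b 1) / 2"
  have m: "v < m" "m < min b 1" using assms v_less_1 by (auto simp: m_def)
  have "G m < G b"
    using G_less[of m "min b 1"] monoD[OF G_mono, of "min b 1" b] m v_pos by auto
  then have "integral {v..b} G < (b - v) * G b"
    using mono_integral_less[OF G_mono, of v m b] m by auto
  moreover have "0 \<le> integral {v..b} G"
    using v_pos G_pos mono_integrable_on[OF G_mono] by (intro integral_nonneg) (auto intro: less_imp_le)
  then have "\<alpha> * integral {v..b} G \<le> integral {v..b} G"
    using assms by (simp add: mult_left_le_one_le)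
  moreover have "integral {0..b} G = integral {0..v} G + integral {v..b} G"
    using assms v_pos mono_integrable_on[OF G_mono]
    by (simp add: Henstock_Kurzweil_Integration.integral_combine)
  then have "payoff G v b \<alpha> - payoff G v v \<alpha> = \<alpha> * integral {v..b} G - (b - v) * G b"
    unfolding payoff_def by (simp add: algebra_simps)
  ultimately show ?thesis
    by linarith
qed

lemma payoff_less_critical:
  assumes \<alpha>: "0 \<le> \<alpha>" "\<alpha> \<le> 1" and b\<^sub>0: "bid0 \<le> b\<^sub>0" "b\<^sub>0 \<le> v" "foc_alpha b\<^sub>0 = \<alpha>"
    and b: "0 \<le> b" "b \<noteq> b\<^sub>0"
  shows "payoff G v b \<alpha> < payoff G v b\<^sub>0 \<alpha>"
proof -
  have "0 < b\<^sub>0" using b\<^sub>0 bid0 by simp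
  have below: "payoff G v x \<alpha> < payoff G v b\<^sub>0 \<alpha>" if "0 \<le> x" "x < b\<^sub>0" for x
  proof (rule DERIV_pos_imp_increasing_open[OF \<open>x < b\<^sub>0\<close>])
    fix y assume y: "x < y" "y < b\<^sub>0"
    then have "0 < G y * (\<alpha> - foc_alpha y)"
      using foc_alpha_less[of y b\<^sub>0] G_pos[of y] b\<^sub>0 that by simp
    then show "\<exists>d. ((\<lambda>b. payoff G v b \<alpha>) has_real_derivative d) (at y) \<and> 0 < d"
      using payoff_DERIV y that b\<^sub>0 v_less_1 by (intro exI) auto
  qed (use continuous_on_subset[OF payoff_continuous_on] that b\<^sub>0 v_less_1 in auto)
  have above: "payoff G v x \<alpha> < payoff G v b\<^sub>0 \<alpha>" if "b\<^sub>0 < x" "x \<le> v" for x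
  proof (rule DERIV_neg_imp_decreasing_open[OF \<open>b\<^sub>0 < x\<close>])
    fix y assume y: "b\<^sub>0 < y" "y < x"
    then have "G y * (\<alpha> - foc_alpha y) < 0"
      using foc_alpha_less[of b\<^sub>0 y] G_pos[of y] \<open>0 < b\<^sub>0\<close> b\<^sub>0 that by (simp add: mult_pos_neg)
    then show "\<exists>d. ((\<lambda>b. payoff G v b \<alpha>) has_real_derivative d) (at y) \<and> d < 0"
      using payoff_DERIV y that \<open>0 < b\<^sub>0\<close> v_less_1 by (intro exI) auto
  qed (use continuous_on_subset[OF payoff_continuous_on] that \<open>0 < b\<^sub>0\<close> v_less_1 in auto)
  have "payoff G v v \<alpha> \<le> payoff G v b\<^sub>0 \<alpha>"
    using above[of v] b\<^sub>0 by (cases "b\<^sub>0 = v") auto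
  then show ?thesis
    using below above payoff_less_beyond_v[OF \<alpha>] b
    by (meson linorder_not_le not_less_iff_gr_or_eq order_less_le_trans)
qed

lemma bstar_foc_alpha:
  assumes "b \<in> {bid0..v}"
  shows "bstar G v (foc_alpha b) = b"
proof (rule bstar_eqI)
  show "0 \<le> b"
    using assms bid0 by auto
  have "foc_alpha b \<in> {0..1}"
    using foc_alpha_image assms by blast
  then show "payoff G v b' (foc_alpha b) < payoff G v b (foc_alpha b)"
    if "0 \<le> b'" "b' \<noteq> b" for b'
    using payoff_less_critical that assms by auto
qed

lemma bstar_mem: "\<alpha> \<in> {0..1} \<Longrightarrow> bstar G v \<alpha> \<in> {bid0..v} \<and> foc_alpha (bstar G v \<alpha>) = \<alpha>"
  using foc_alpha_image bstar_foc_alpha by (metis imageE)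

lemma bstar_strict_mono_on: "strict_mono_on {0..1} (bstar G v)"
proof (rule strict_mono_onI)
  fix r s :: real assume rs: "r \<in> {0..1}" "s \<in> {0..1}" "r < s"
  show "bstar G v r < bstar G v s"
  proof (rule ccontr)
    assume "\<not> bstar G v r < bstar G v s"
    then have "foc_alpha (bstar G v s) \<le> foc_alpha (bstar G v r)"
      using foc_alpha_mono[of "bstar G v s" "bstar G v r"] bstar_mem[OF rs(1)] bstar_mem[OF rs(2)]
        bid0
      by auto
    then show False using bstar_mem rs by simp
  qed
qed

lemma bstar_continuous_on: "continuous_on {0..1} (bstar G v)"
  using continuous_on_inv[of "{bid0..v}" foc_alpha "bstar G v"] foc_alpha_continuous_on[of bid0 v]
    foc_alpha_image bstar_foc_alpha bid0 v_less_1
  by auto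

lemma bstar_DERIV:
  assumes "\<alpha> \<in> {0..1}"
  shows "(bstar G v has_real_derivative inverse (deriv foc_alpha (bstar G v \<alpha>))) (at \<alpha> within {0..1})"
proof -
  define b where "b = bstar G v \<alpha>"
  have b: "b \<in> {bid0..v}" "foc_alpha b = \<alpha>"
    using bstar_mem[OF assms] unfolding b_def by auto
  then have "0 < b" "b < 1" using bid0 v_less_1 by auto
  have "(bstar G v has_real_derivative inverse (deriv foc_alpha b))
      (at (foc_alpha b) within foc_alpha ` {bid0..v})"
  proof (rule DERIV_inverse_function_within)
    show "(foc_alpha has_real_derivative deriv foc_alpha b) (at b within {bid0..v})"
      using foc_alpha_DERIV[OF \<open>0 < b\<close> \<open>b < 1\<close>] by (rule has_field_derivative_at_within)
    show "deriv foc_alpha b \<noteq> 0"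
      using deriv_foc_alpha_ge[of b] b B1_pos \<open>0 < b\<close> by auto
    show "continuous (at (foc_alpha b) within foc_alpha ` {bid0..v}) (bstar G v)"
      using bstar_continuous_on assms b foc_alpha_image by (simp add: continuous_on_eq_continuous_within)
  qed (use b bstar_foc_alpha in auto)
  then show ?thesis
    using b foc_alpha_image unfolding b_def by simp
qed

end

theorem lemma9:
  fixes G g :: "real \<Rightarrow> real" and B1 B2 v :: real
  assumes G_mono: "mono G"
    and G_zero: "\<forall>x\<le>0. G x = 0"
    and G_top: "(G \<longlongrightarrow> 1) at_top"
    and G_rcont: "\<forall>x. continuous (at_right x) G"
    and G_deriv: "\<forall>x\<in>{0..1}. (G has_real_derivative g x) (at x within {0..1})"
    and g_diff: "\<forall>x\<in>{0..1}. g differentiable (at x within {0..1})"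
    and G_logconcave: "concave_on {x. 0 < G x} (\<lambda>x. ln (G x))"
    and B1_pos: "B1 > 0" and B2_pos: "B2 > 0"
    and g_bounds: "\<forall>x\<in>{0..1}. B1 \<le> g x \<and> g x \<le> B2"
    and v_range: "0 < v" "v < 1"
  shows "strict_mono_on {0..1} (bstar G v) \<and>
         (\<forall>\<alpha>\<in>{0..1}. \<exists>D. (bstar G v has_real_derivative D) (at \<alpha> within {0..1}) \<and> D \<le> 1 / B1)"
proof -
  interpret bidder G g B1 v
    by unfold_locales (use assms in auto)
  have "inverse (deriv foc_alpha (bstar G v \<alpha>)) \<le> 1 / B1" if "\<alpha> \<in> {0..1}" for \<alpha>
    using deriv_foc_alpha_ge bstar_mem[OF that] bid0 B1_pos
    by (simp add: inverse_eq_divide[symmetric] le_imp_inverse_le)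
  then show ?thesis
    using bstar_strict_mono_on bstar_DERIV by blast
qed

end
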